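(* Let $G$ be a finite abelian group of type $(m_1,\dots,m_r)$. Then $$\operatorname{diam}^+(G)=\sum_{i=1}^r (m_i-1).$$
   Context: Groups are written additively. A finite abelian group $G$ has type $(m_1,\dots,m_r)$ if $G\cong \mathbb{Z}_{m_1}\oplus\dots\oplus\mathbb{Z}_{m_r}$ with $1\neq m_1\mid m_2\mid\dots\mid m_r$; $r$ is the rank $\operatorname{rk}(G)$. For $A\subseteq G$ let $A_0:=A\cup\{0\}$ and for $\rho\in\mathbb{N}_0$ let $\langle A\rangle^+_\rho:=\rho A_0=\{a_1+\dots+a_\rho: a_i\in A_0\}$ (so $\langle A\rangle_0^+=\{0\}$), the set of elements expressible as a sum of at most $\rho$ elements of $A$. The positive diameter of $G$ with respect to $A$ is $\operatorname{diam}^+_A(G):=\min\{\rho\in\mathbb{N}_0:\langle A\rangle^+_\rho=G\}$ (with $\min\varnothing=\infty$, so it is finite iff $A$ generates $G$). The absolute diameter is $\operatorname{diam}^+(G):=\max\{\operatorname{diam}^+_A(G): A\subseteq G,\ \langle A\rangle=G\}$. *)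

theory Defs
  imports "HOL-Algebra.Algebra" "HOL-Library.Extended_Nat"
begin

text \<open>Groups in HOL-Algebra are written multiplicatively; the group operation
  plays the role of the paper's addition and the unit the role of 0.\<close>

primrec pos_sums :: "('a, 'b) monoid_scheme \<Rightarrow> 'a set \<Rightarrow> nat \<Rightarrow> 'a set" where
  "pos_sums G A 0 = {\<one>\<^bsub>G\<^esub>}"
| "pos_sums G A (Suc n) = {x \<otimes>\<^bsub>G\<^esub> a | x a. x \<in> pos_sums G A n \<and> a \<in> A \<union> {\<one>\<^bsub>G\<^esub>}}"

definition pos_diam_wrt :: "('a, 'b) monoid_scheme \<Rightarrow> 'a set \<Rightarrow> enat" where
  "pos_diam_wrt G A =
     (if \<exists>\<rho>. pos_sums G A \<rho> = carrier G
      then enat (LEAST \<rho>. pos_sums G A \<rho> = carrier G) else \<infinity>)"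

definition pos_diam :: "('a, 'b) monoid_scheme \<Rightarrow> enat" where
  "pos_diam G = Sup {pos_diam_wrt G A | A. A \<subseteq> carrier G \<and> generate G A = carrier G}"

end

theory Submission
  imports Defs "HOL-Computational_Algebra.Primes"
begin

(* Both bounds are proved for a basis g_0, ..., g_(r-1) of a subgroup S with orders n_0 | ... | n_(r-1):
   the map c \<mapsto> g_0^c_0 \<otimes> ... \<otimes> g_(r-1)^c_(r-1) is a bijection from the box of exponent vectors
   with 0 \<le> c_i < n_i onto S (section on power products and bases).

   Lower bound: a product of at most \<rho> of the g_i is a power product with exponent sum at most \<rho>;
   by uniqueness of reduced exponents, g_0^(n_0-1) \<otimes> ... \<otimes> g_(r-1)^(n_(r-1)-1) needs \<Sum>(n_i - 1) factors.

   Upper bound, for ANY generating set A of S, by induction on \<Sum> n_i.  A prime p dividing the first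
   non-trivial n_j divides every non-trivial n_i.  The subgroup S^p of p-th powers is generated by the
   p-th powers of A and has the basis g_i^p with orders n_i' = n_i / p (or 1), so by induction it is
   covered by products of p \<Sum>(n_i' - 1) elements of A.  Since [S : S^p] = p^t and S / S^p has exponent p,
   adjoining elements of A one at a time gives S = S^p \<otimes> (products of at most (p - 1) t elements of A).
   The identity \<Sum>(n_i - 1) = p \<Sum>(n_i' - 1) + (p - 1) t closes the induction.

   The main theorem transports the standard basis of the product of the cyclic groups Z_(m_i) along the
   given isomorphism and combines the two bounds. *)


context monoid
begin

lemma pos_sums_carrier:
  assumes "A \<subseteq> carrier G" shows "pos_sums G A n \<subseteq> carrier G"
  by (induction n) (use assms in auto)

lemma pos_sums_one: "\<one> \<in> pos_sums G A n"
proof (induction n)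
  case (Suc n) then show ?case by (auto intro!: exI[of _ "\<one>"])
qed simp

lemma pos_sums_mult:
  assumes "A \<subseteq> carrier G" "x \<in> pos_sums G A m"
  shows "y \<in> pos_sums G A n \<Longrightarrow> x \<otimes> y \<in> pos_sums G A (m + n)"
proof (induction n arbitrary: y)
  case 0 then show ?case using assms pos_sums_carrier[OF assms(1), of m] by auto
next
  case (Suc n)
  then obtain z a where z: "y = z \<otimes> a" "z \<in> pos_sums G A n" "a \<in> A \<union> {\<one>}" by auto
  have c: "a \<in> carrier G" "z \<in> carrier G" "x \<in> carrier G"
    using z assms pos_sums_carrier[OF assms(1)] by auto
  have "x \<otimes> y = (x \<otimes> z) \<otimes> a"
    using z(1) c by (simp add: m_assoc)
  then show ?case using Suc.IH[OF z(2)] z(3) by auto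
qed

lemma pos_sums_mono:
  assumes "A \<subseteq> carrier G" "x \<in> pos_sums G A m" "m \<le> n"
  shows "x \<in> pos_sums G A n"
proof -
  have "x \<otimes> \<one> \<in> pos_sums G A (m + (n - m))"
    by (rule pos_sums_mult[OF assms(1-2) pos_sums_one])
  moreover have "x \<in> carrier G" using assms pos_sums_carrier[OF assms(1)] by auto
  ultimately show ?thesis using assms by auto
qed

lemma pos_sums_pow:
  assumes "A \<subseteq> carrier G" "a \<in> A"
  shows "a [^] (j::nat) \<in> pos_sums G A j"
  by (induction j) (use assms in auto)

lemma pos_sums_compose:
  assumes "A \<subseteq> carrier G" "B \<subseteq> pos_sums G A k"
  shows "pos_sums G B n \<subseteq> pos_sums G A (k * n)"
proof (induction n)
  case (Suc n)
  show ?case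
  proof
    fix x assume "x \<in> pos_sums G B (Suc n)"
    then obtain z b where z: "x = z \<otimes> b" "z \<in> pos_sums G B n" "b \<in> B \<union> {\<one>}" by auto
    have "b \<in> pos_sums G A k" using z(3) assms pos_sums_one by auto
    then have "x \<in> pos_sums G A (k * n + k)"
      using pos_sums_mult[OF assms(1)] Suc z by auto
    then show "x \<in> pos_sums G A (k * Suc n)" by (simp add: add.commute)
  qed
qed simp

end

lemma pos_diam_eqI:
  assumes upper: "\<And>A. A \<subseteq> carrier G \<Longrightarrow> generate G A = carrier G \<Longrightarrow> pos_sums G A f = carrier G"
    and A0: "A0 \<subseteq> carrier G" "generate G A0 = carrier G"
    and lower: "\<And>\<rho>. \<rho> < f \<Longrightarrow> pos_sums G A0 \<rho> \<noteq> carrier G"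
  shows "pos_diam G = enat f"
proof -
  have wrt: "pos_diam_wrt G A = enat (LEAST \<rho>. pos_sums G A \<rho> = carrier G)"
    if "A \<subseteq> carrier G" "generate G A = carrier G" for A
    using upper[OF that] unfolding pos_diam_wrt_def by auto
  have "pos_diam_wrt G A \<le> enat f" if "A \<subseteq> carrier G" "generate G A = carrier G" for A
    unfolding wrt[OF that] using Least_le[of "\<lambda>\<rho>. pos_sums G A \<rho> = carrier G" f] upper[OF that] by simp
  moreover have "pos_diam_wrt G A0 = enat f"
    unfolding wrt[OF A0]
    by (rule arg_cong[where f = enat], rule Least_equality) (use upper[OF A0] lower in \<open>auto simp: not_less[symmetric]\<close>)
  ultimately show ?thesis unfolding pos_diam_def
    by (intro antisym Sup_least Sup_upper) (use A0 in \<open>auto intro!: exI[of _ A0]\<close>)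
qed


section \<open>Power products and bases\<close>

primrec power_prod :: "('a, 'b) monoid_scheme \<Rightarrow> (nat \<Rightarrow> 'a) \<Rightarrow> (nat \<Rightarrow> nat) \<Rightarrow> nat \<Rightarrow> 'a" where
  "power_prod G g c 0 = \<one>\<^bsub>G\<^esub>"
| "power_prod G g c (Suc k) = power_prod G g c k \<otimes>\<^bsub>G\<^esub> (g k [^]\<^bsub>G\<^esub> c k)"

abbreviation box :: "nat \<Rightarrow> (nat \<Rightarrow> nat) \<Rightarrow> (nat \<Rightarrow> nat) set" where
  "box r n \<equiv> PiE {..<r} (\<lambda>i. {..<n i})"

definition basis :: "('a, 'b) monoid_scheme \<Rightarrow> 'a set \<Rightarrow> nat \<Rightarrow> (nat \<Rightarrow> nat) \<Rightarrow> (nat \<Rightarrow> 'a) \<Rightarrow> bool" where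
  "basis G S r n g \<longleftrightarrow> (\<forall>i<r. g i \<in> S \<and> g i [^]\<^bsub>G\<^esub> n i = \<one>\<^bsub>G\<^esub>)
     \<and> bij_betw (\<lambda>c. power_prod G g c r) (box r n) S"

lemma basis_card: "basis G S r n g \<Longrightarrow> card S = (\<Prod>i<r. n i)"
  unfolding basis_def by (auto dest!: bij_betw_same_card simp: card_PiE)

lemma power_prod_cong: "(\<And>i. i < k \<Longrightarrow> c i = c' i) \<Longrightarrow> power_prod G g c k = power_prod G g c' k"
  by (induction k) auto

lemma (in monoid) power_prod_closed:
  "(\<And>i. i < k \<Longrightarrow> g i \<in> carrier G) \<Longrightarrow> power_prod G g c k \<in> carrier G"
  by (induction k) auto

lemma (in monoid) power_prod_zero: "power_prod G g (\<lambda>_. 0) k = \<one>"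
  by (induction k) auto

lemma (in group) subgroup_nat_pow: "subgroup K G \<Longrightarrow> x \<in> K \<Longrightarrow> x [^] (n::nat) \<in> K"
  by (induction n) (auto intro: subgroup.m_closed subgroup.one_closed)

lemma (in group) power_prod_subgroup:
  "subgroup S G \<Longrightarrow> (\<And>i. i < k \<Longrightarrow> g i \<in> S) \<Longrightarrow> power_prod G g c k \<in> S"
  by (induction k) (auto intro: subgroup.m_closed subgroup.one_closed subgroup_nat_pow)

lemma power_prod_hom:
  assumes "h \<in> hom H G" "group H" "group G" "\<And>i. i < k \<Longrightarrow> e i \<in> carrier H"
  shows "h (power_prod H e c k) = power_prod G (\<lambda>i. h (e i)) c k"
  using assms(4)
proof (induction k)
  case 0 then show ?case using hom_one[OF assms(1-3)] by simp
next
  case (Suc k)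
  have "power_prod H e c k \<in> carrier H"
    by (rule monoid.power_prod_closed[OF group.is_monoid[OF assms(2)]]) (use Suc.prems in auto)
  then show ?case using Suc hom_mult[OF assms(1)] hom_nat_pow[OF assms(1) _ assms(2,3)]
    by (simp add: group.is_monoid[OF assms(2)] monoid.nat_pow_closed)
qed

context comm_group
begin

lemma power_prod_add:
  assumes "\<And>i. i < k \<Longrightarrow> g i \<in> carrier G"
  shows "power_prod G g (\<lambda>i. c i + d i) k = power_prod G g c k \<otimes> power_prod G g d k"
  using assms
proof (induction k)
  case (Suc k)
  have c: "g k \<in> carrier G" "power_prod G g c k \<in> carrier G" "power_prod G g d k \<in> carrier G"
    using Suc.prems by (auto intro: power_prod_closed)
  have "power_prod G g (\<lambda>i. c i + d i) (Suc k)
      = (power_prod G g c k \<otimes> power_prod G g d k) \<otimes> (g k [^] c k \<otimes> g k [^] d k)"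
    using Suc by (simp add: nat_pow_mult)
  also have "\<dots> = power_prod G g c (Suc k) \<otimes> power_prod G g d (Suc k)"
    using c by (simp add: m_ac)
  finally show ?case .
qed simp

lemma power_prod_delta:
  assumes "\<And>i. i < k \<Longrightarrow> g i \<in> carrier G"
  shows "power_prod G g (\<lambda>i. if i = j then 1 else 0) k = (if j < k then g j else \<one>)"
  using assms
proof (induction k)
  case (Suc k)
  show ?case
  proof (cases "j = k")
    case True
    then have "power_prod G g (\<lambda>i. if i = j then 1 else 0) k = \<one>" using Suc by simp
    then show ?thesis using True Suc.prems by simp
  next
    case False then show ?thesis using Suc by (simp add: less_Suc_eq)
  qed
qed simp

lemma power_prod_pow:
  assumes "\<And>i. i < k \<Longrightarrow> g i \<in> carrier G"
  shows "(power_prod G g c k) [^] (p::nat) = power_prod G g (\<lambda>i. p * c i) k"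
  using assms
proof (induction k)
  case (Suc k)
  have "(power_prod G g c (Suc k)) [^] p = (power_prod G g c k) [^] p \<otimes> (g k [^] c k) [^] p"
    using Suc.prems by (simp add: nat_pow_distrib power_prod_closed)
  also have "\<dots> = power_prod G g (\<lambda>i. p * c i) (Suc k)"
    using Suc by (simp add: nat_pow_pow mult.commute)
  finally show ?case .
qed simp

lemma power_prod_gen_pow:
  "(\<And>i. i < k \<Longrightarrow> g i \<in> carrier G) \<Longrightarrow>
     power_prod G (\<lambda>i. g i [^] (p::nat)) c k = power_prod G g (\<lambda>i. p * c i) k"
  by (induction k) (auto simp: nat_pow_pow)

lemma power_prod_mod:
  assumes "\<And>i. i < k \<Longrightarrow> g i \<in> carrier G \<and> g i [^] n i = \<one>"
  shows "power_prod G g c k = power_prod G g (\<lambda>i. c i mod n i) k"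
  using assms
proof (induction k)
  case (Suc k)
  have gk: "g k \<in> carrier G" "g k [^] n k = \<one>" using Suc.prems by auto
  have "g k [^] (c k mod n k) \<otimes> (g k [^] n k) [^] (c k div n k) = g k [^] c k"
    using gk(1) by (simp only: nat_pow_pow nat_pow_mult mod_mult_div_eq)
  then have "g k [^] c k = g k [^] (c k mod n k)" using gk by simp
  then show ?case using Suc by simp
qed simp

end


section \<open>The lower bound\<close>

context comm_group
begin

lemma pos_sums_power_prod:
  assumes gc: "\<And>i. i < r \<Longrightarrow> g i \<in> carrier G"
  shows "x \<in> pos_sums G (g ` {..<r}) k \<Longrightarrow> \<exists>d. x = power_prod G g d r \<and> (\<Sum>i<r. d i) \<le> k"
proof (induction k arbitrary: x)
  case 0 then show ?case using power_prod_zero by (auto intro!: exI[of _ "\<lambda>_. 0"])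
next
  case (Suc k)
  then obtain y a where ya: "x = y \<otimes> a" "y \<in> pos_sums G (g ` {..<r}) k" "a \<in> g ` {..<r} \<union> {\<one>}"
    by auto
  obtain d where d: "y = power_prod G g d r" "(\<Sum>i<r. d i) \<le> k" using Suc.IH[OF ya(2)] by auto
  show ?case
  proof (cases "a = \<one>")
    case True
    then have "x = y" using ya power_prod_closed[where g = g, OF gc] d by simp
    then show ?thesis using d le_SucI by blast
  next
    case False
    then obtain j where j: "j < r" "a = g j" using ya by auto
    define d' where "d' = (\<lambda>i. d i + (if i = j then 1 else 0))"
    have "power_prod G g d' r = power_prod G g d r \<otimes> power_prod G g (\<lambda>i. if i = j then 1 else 0) r"
      unfolding d'_def by (rule power_prod_add[where g = g, OF gc])
    also have "\<dots> = y \<otimes> a"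
      using power_prod_delta[where g = g and j = j, OF gc] j d by simp
    finally have "x = power_prod G g d' r" using ya by simp
    moreover have "(\<Sum>i<r. d' i) = (\<Sum>i<r. d i) + 1"
      unfolding d'_def using j by (simp add: sum.distrib)
    ultimately show ?thesis using d by auto
  qed
qed

lemma lower_bound:
  assumes B: "basis G (carrier G) r n g" and pos: "\<forall>i<r. 0 < n i" and rho: "\<rho> < (\<Sum>i<r. n i - 1)"
  shows "pos_sums G (g ` {..<r}) \<rho> \<noteq> carrier G"
proof
  assume eq: "pos_sums G (g ` {..<r}) \<rho> = carrier G"
  have gcn: "\<And>i. i < r \<Longrightarrow> g i \<in> carrier G \<and> g i [^] n i = \<one>"
    and inj: "inj_on (\<lambda>c. power_prod G g c r) (box r n)"
    using B unfolding basis_def bij_betw_def by auto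
  then have gc: "\<And>i. i < r \<Longrightarrow> g i \<in> carrier G" by blast
  define w where "w = power_prod G g (\<lambda>i. n i - 1) r"
  have "w \<in> carrier G" unfolding w_def using power_prod_closed gc by auto
  then obtain d where d: "w = power_prod G g d r" "(\<Sum>i<r. d i) \<le> \<rho>"
    using pos_sums_power_prod[where g = g, OF gc] eq by blast
  have "power_prod G g (restrict (\<lambda>i. d i mod n i) {..<r}) r = power_prod G g (\<lambda>i. d i mod n i) r"
    by (rule power_prod_cong) auto
  also have "\<dots> = power_prod G g d r" by (rule power_prod_mod[OF gcn, symmetric])
  also have "\<dots> = power_prod G g (restrict (\<lambda>i. n i - 1) {..<r}) r"
    unfolding d(1)[symmetric] w_def by (rule power_prod_cong) auto
  finally have restr: "restrict (\<lambda>i. d i mod n i) {..<r} = restrict (\<lambda>i. n i - 1) {..<r}"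
    using pos by (intro inj_onD[OF inj]) auto
  have "d i mod n i = n i - 1" if "i < r" for i
  proof -
    have "restrict (\<lambda>i. d i mod n i) {..<r} i = restrict (\<lambda>i. n i - 1) {..<r} i" by (simp only: restr)
    then show ?thesis using that by simp
  qed
  then have "n i - 1 \<le> d i" if "i < r" for i
    using mod_less_eq_dividend[of "d i" "n i"] that by simp
  then have "(\<Sum>i<r. n i - 1) \<le> (\<Sum>i<r. d i)" by (intro sum_mono) auto
  then show False using d rho by auto
qed

lemma basis_generates:
  assumes B: "basis G (carrier G) r n g"
  shows "generate G (g ` {..<r}) = carrier G"
proof
  have gc: "g ` {..<r} \<subseteq> carrier G" using B unfolding basis_def by auto
  then show "generate G (g ` {..<r}) \<subseteq> carrier G" by (rule generate_incl)
  show "carrier G \<subseteq> generate G (g ` {..<r})"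
  proof
    fix x assume "x \<in> carrier G"
    moreover have "carrier G = (\<lambda>c. power_prod G g c r) ` box r n"
      using B unfolding basis_def bij_betw_def by simp
    ultimately obtain c where "x = power_prod G g c r" by blast
    moreover have "power_prod G g c r \<in> generate G (g ` {..<r})"
      by (rule power_prod_subgroup[OF generate_is_subgroup[OF gc]]) (auto intro: generate.incl)
    ultimately show "x \<in> generate G (g ` {..<r})" by simp
  qed
qed

end


section \<open>Adjoining an element whose p-th power lies in a subgroup\<close>

lemma (in group) pow_not_in_subgroup:
  assumes K: "subgroup K G" and a: "a \<in> carrier G" "a [^] p \<in> K" "a \<notin> K"
    and p: "Factorial_Ring.prime (p::nat)" and d: "0 < d" "d < p"
  shows "a [^] d \<notin> K"
proof
  assume ad: "a [^] d \<in> K"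
  have "\<not> p dvd d" using d by (auto dest: dvd_imp_le)
  then have "coprime p d" using p by (intro prime_imp_coprime)
  then have "gcd d p = 1" by (simp add: coprime_iff_gcd_eq_1 gcd.commute)
  then obtain x y where xy: "d * x = p * y + 1" using bezout_nat[of d p] d by auto
  have pyK: "a [^] (p * y) \<in> K" using a K subgroup_nat_pow[of K "a [^] p" y] by (simp add: nat_pow_pow)
  have "a [^] (p * y) \<otimes> a = a [^] (d * x)" using xy a by simp
  also have "\<dots> \<in> K" using ad K subgroup_nat_pow[of K "a [^] d" x] a by (simp add: nat_pow_pow)
  finally have "inv (a [^] (p * y)) \<otimes> (a [^] (p * y) \<otimes> a) \<in> K"
    using pyK K by (meson subgroup.m_closed subgroup.m_inv_closed)
  then show False using a by (simp add: m_assoc[symmetric])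
qed

text \<open>The subgroup generated by K and a, when a^p \<in> K: the union of the cosets K a^j, j < p.\<close>
definition adjoin :: "('a, 'b) monoid_scheme \<Rightarrow> 'a set \<Rightarrow> 'a \<Rightarrow> nat \<Rightarrow> 'a set" where
  "adjoin G K a p = {k \<otimes>\<^bsub>G\<^esub> a [^]\<^bsub>G\<^esub> j | k j. k \<in> K \<and> j < p}"

context comm_group
begin

text \<open>Products in adjoin G K a p: exponents j + j' \<ge> p are reduced using a^p \<in> K.\<close>
lemma adjoin_mult_closed:
  assumes K: "subgroup K G" and a: "a \<in> carrier G" "a [^] p \<in> K"
    and bc: "b \<in> adjoin G K a p" "c \<in> adjoin G K a p"
  shows "b \<otimes> c \<in> adjoin G K a p"
proof -
  obtain k j k' j' where kj: "b = k \<otimes> a [^] j" "k \<in> K" "j < p"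
    and kj': "c = k' \<otimes> a [^] j'" "k' \<in> K" "j' < p" using bc unfolding adjoin_def by auto
  have kc: "k \<in> carrier G" "k' \<in> carrier G" using kj kj' subgroup.subset[OF K] by auto
  have kk: "k \<otimes> k' \<in> K" using kj kj' K by (meson subgroup.m_closed)
  have bc_eq: "b \<otimes> c = (k \<otimes> k') \<otimes> a [^] (j + j')"
    using kj kj' kc a by (simp add: m_ac nat_pow_mult[symmetric])
  show ?thesis
  proof (cases "j + j' < p")
    case True then show ?thesis using bc_eq kk unfolding adjoin_def by auto
  next
    case False
    have "a [^] (j + j') = a [^] p \<otimes> a [^] (j + j' - p)" using False a by (simp add: nat_pow_mult)
    then have "b \<otimes> c = (k \<otimes> k' \<otimes> a [^] p) \<otimes> a [^] (j + j' - p)"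
      using bc_eq kc a by (simp add: m_ac)
    moreover have "k \<otimes> k' \<otimes> a [^] p \<in> K" using kk a K by (meson subgroup.m_closed)
    moreover have "j + j' - p < p" using kj kj' by auto
    ultimately show ?thesis unfolding adjoin_def by auto
  qed
qed

text \<open>Inverses in adjoin G K a p: inv (k a^j) = (inv k) (inv a^p) a^(p - j).\<close>
lemma adjoin_inv_closed:
  assumes K: "subgroup K G" and a: "a \<in> carrier G" "a [^] p \<in> K" and p: "0 < p"
    and b: "b \<in> adjoin G K a p"
  shows "inv b \<in> adjoin G K a p"
proof -
  obtain k j where kj: "b = k \<otimes> a [^] j" "k \<in> K" "j < p" using b unfolding adjoin_def by auto
  have kc: "k \<in> carrier G" using kj subgroup.subset[OF K] by auto
  show ?thesis
  proof (cases "j = 0")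
    case True
    then have "inv b = inv k \<otimes> a [^] (0::nat)" using kj kc by simp
    then show ?thesis unfolding adjoin_def using kj p subgroup.m_inv_closed[OF K] by blast
  next
    case False
    have "a [^] p = a [^] j \<otimes> a [^] (p - j)" using kj a by (simp add: nat_pow_mult)
    then have "inv b = (inv k \<otimes> inv (a [^] p)) \<otimes> a [^] (p - j)"
      using kj kc a by (simp add: inv_mult m_ac)
    moreover have "inv k \<otimes> inv (a [^] p) \<in> K"
      using kj a K by (meson subgroup.m_closed subgroup.m_inv_closed)
    moreover have "p - j < p" using False kj by auto
    ultimately show ?thesis unfolding adjoin_def by blast
  qed
qed

lemma adjoin_subgroup:
  assumes K: "subgroup K G" and a: "a \<in> carrier G" "a [^] p \<in> K" and p: "0 < p"
  shows "subgroup (adjoin G K a p) G"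
proof (rule subgroupI)
  show "adjoin G K a p \<subseteq> carrier G" unfolding adjoin_def using a subgroup.subset[OF K] by auto
  have "\<one> \<otimes> a [^] (0::nat) \<in> adjoin G K a p"
    unfolding adjoin_def using p subgroup.one_closed[OF K] by blast
  then show "adjoin G K a p \<noteq> {}" by blast
qed (use adjoin_inv_closed[OF K a p] adjoin_mult_closed[OF K a] in auto)

lemma adjoin_superset:
  assumes "subgroup K G" "0 < p" shows "K \<subseteq> adjoin G K a p"
  unfolding adjoin_def using assms subgroup.subset by (force intro!: exI[of _ "0::nat"])

text \<open>For prime p and a \<notin> K the p cosets K a^j are pairwise distinct, so adjoining a
  multiplies the order by p.\<close>
lemma adjoin_card:
  assumes fin: "finite (carrier G)" and K: "subgroup K G"
    and a: "a \<in> carrier G" "a [^] p \<in> K" "a \<notin> K" and p: "Factorial_Ring.prime p"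
  shows "p * card K \<le> card (adjoin G K a p)"
proof -
  have Kc: "K \<subseteq> carrier G" using K by (rule subgroup.subset)
  have same_pow: "j = j'"
    if eq: "k \<otimes> a [^] j = k' \<otimes> a [^] j'" and k: "k \<in> K" "k' \<in> K" and j: "j \<le> j'" "j' < p"
    for k k' j j'
  proof (rule ccontr)
    assume "j \<noteq> j'"
    have kc: "k \<in> carrier G" "k' \<in> carrier G" using k Kc by auto
    have "a [^] j' = a [^] (j' - j) \<otimes> a [^] j" using j a by (simp add: nat_pow_mult)
    then have "k \<otimes> a [^] j = (k' \<otimes> a [^] (j' - j)) \<otimes> a [^] j"
      using eq kc a by (simp add: m_assoc)
    then have "k = k' \<otimes> a [^] (j' - j)" using kc a by (simp add: r_cancel)
    then have "a [^] (j' - j) = inv k' \<otimes> k" using kc a by (simp add: m_assoc[symmetric])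
    moreover have "inv k' \<otimes> k \<in> K" using k K by (meson subgroup.m_closed subgroup.m_inv_closed)
    moreover have "a [^] (j' - j) \<notin> K"
      by (rule pow_not_in_subgroup[OF K a p]) (use j \<open>j \<noteq> j'\<close> in auto)
    ultimately show False by simp
  qed
  have "inj_on (\<lambda>(k, j). k \<otimes> a [^] j) (K \<times> {..<p})"
  proof (rule inj_onI, clarsimp)
    fix k j k' j' assume h: "k \<otimes> a [^] j = k' \<otimes> a [^] j'" "k \<in> K" "j < p" "k' \<in> K" "j' < p"
    then have "j = j'" using same_pow[of k j k' j'] same_pow[of k' j' k j] by (cases "j \<le> j'") auto
    then show "k = k' \<and> j = j'" using h Kc a by (auto simp: subset_iff)
  qed
  moreover have "(\<lambda>(k, j). k \<otimes> a [^] j) ` (K \<times> {..<p}) \<subseteq> adjoin G K a p"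
    unfolding adjoin_def by auto
  moreover have "finite (adjoin G K a p)"
    using adjoin_subgroup[OF K a(1,2) prime_gt_0_nat[OF p]] fin subgroup.subset finite_subset by metis
  ultimately have "card (K \<times> {..<p}) \<le> card (adjoin G K a p)" by (rule card_inj_on_le)
  then show ?thesis by (simp add: card_cartesian_product mult.commute)
qed

lemma adjoin_cover:
  assumes A: "A \<subseteq> carrier G" "a \<in> A" and y: "y \<in> adjoin G K a p"
  shows "\<exists>k\<in>K. \<exists>s\<in>pos_sums G A (p - 1). y = k \<otimes> s"
proof -
  obtain k j where kj: "y = k \<otimes> a [^] j" "k \<in> K" "j < p" using y unfolding adjoin_def by auto
  have "a [^] j \<in> pos_sums G A (p - 1)"
    by (rule pos_sums_mono[OF A(1) pos_sums_pow[OF A]]) (use kj in auto)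
  then show ?thesis using kj by blast
qed

lemma enlarge_subgroup:
  assumes fin: "finite (carrier G)" and p: "Factorial_Ring.prime p" and S: "subgroup S G"
    and A: "A \<subseteq> S" "generate G A = S"
    and K: "subgroup K G" "K \<subseteq> S" "K \<noteq> S" "\<forall>x\<in>S. x [^] p \<in> K"
  obtains K' where "subgroup K' G" "K \<subseteq> K'" "K' \<subseteq> S" "p * card K \<le> card K'"
    "\<forall>y\<in>K'. \<exists>k\<in>K. \<exists>s\<in>pos_sums G A (p - 1). y = k \<otimes> s"
proof -
  have "\<not> A \<subseteq> K" using K generate_subgroup_incl[OF _ K(1)] A by auto
  then obtain a where a: "a \<in> A" "a \<notin> K" by auto
  have Ac: "A \<subseteq> carrier G" using A subgroup.subset[OF S] by auto
  have ac: "a \<in> carrier G" and apK: "a [^] p \<in> K" using a A Ac K(4) by auto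
  have p0: "0 < p" using p by (rule prime_gt_0_nat)
  show ?thesis
  proof (rule that)
    show "subgroup (adjoin G K a p) G" by (rule adjoin_subgroup[OF K(1) ac apK p0])
    show "K \<subseteq> adjoin G K a p" by (rule adjoin_superset[OF K(1) p0])
    show "adjoin G K a p \<subseteq> S" unfolding adjoin_def
      using K(2) a(1) A(1) by (auto intro!: subgroup.m_closed[OF S] subgroup_nat_pow[OF S])
    show "p * card K \<le> card (adjoin G K a p)" by (rule adjoin_card[OF fin K(1) ac apK a(2) p])
    show "\<forall>y\<in>adjoin G K a p. \<exists>k\<in>K. \<exists>s\<in>pos_sums G A (p - 1). y = k \<otimes> s"
      using adjoin_cover[OF Ac a(1)] by blast
  qed
qed

lemma tower:
  assumes fin: "finite (carrier G)" and p: "Factorial_Ring.prime p" and S: "subgroup S G"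
    and A: "A \<subseteq> S" "generate G A = S"
  shows "subgroup K G \<Longrightarrow> K \<subseteq> S \<Longrightarrow> (\<forall>x\<in>S. x [^] p \<in> K) \<Longrightarrow> card S \<le> p ^ t * card K
     \<Longrightarrow> \<forall>x\<in>S. \<exists>k\<in>K. \<exists>s\<in>pos_sums G A ((p - 1) * t). x = k \<otimes> s"
proof (induction t arbitrary: K)
  have Sc: "S \<subseteq> carrier G" using S by (rule subgroup.subset)
  then have Ac: "A \<subseteq> carrier G" using A by auto
  have trivial: "\<forall>x\<in>S. \<exists>k\<in>S. \<exists>s\<in>pos_sums G A n. x = k \<otimes> s" for n
    using Sc pos_sums_one r_one by (metis subsetD)
  {
    case (0 K)
    then have "K = S" using fin Sc finite_subset by (intro card_seteq) auto
    show ?case unfolding \<open>K = S\<close> by (rule trivial)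
  }
  {
    case (Suc t K)
    show ?case
    proof (cases "K = S")
      case True show ?thesis unfolding True by (rule trivial)
    next
      case False
      obtain K' where K': "subgroup K' G" "K \<subseteq> K'" "K' \<subseteq> S" "p * card K \<le> card K'"
        and K'_cover: "\<forall>y\<in>K'. \<exists>k\<in>K. \<exists>s\<in>pos_sums G A (p - 1). y = k \<otimes> s"
        using enlarge_subgroup[OF fin p S A Suc.prems(1,2) False Suc.prems(3)] by blast
      have "card S \<le> p ^ t * (p * card K)" using Suc.prems(4) by (simp add: ac_simps)
      also have "\<dots> \<le> p ^ t * card K'" using K'(4) by simp
      finally have IH: "\<forall>x\<in>S. \<exists>k'\<in>K'. \<exists>s\<in>pos_sums G A ((p - 1) * t). x = k' \<otimes> s"
        using Suc.IH[OF K'(1,3)] Suc.prems(3) K'(2) by auto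
      show ?thesis
      proof
        fix x assume "x \<in> S"
        then obtain k' s where x: "x = k' \<otimes> s" "k' \<in> K'" "s \<in> pos_sums G A ((p - 1) * t)"
          using IH by blast
        then obtain k u where ku: "k' = k \<otimes> u" "k \<in> K" "u \<in> pos_sums G A (p - 1)"
          using K'_cover by blast
        have "k \<in> carrier G" "u \<in> carrier G" "s \<in> carrier G"
          using ku x Suc.prems(1) subgroup.subset pos_sums_carrier[OF Ac] by blast+
        then have "x = k \<otimes> (u \<otimes> s)" using x(1) ku(1) by (simp add: m_assoc)
        moreover have "u \<otimes> s \<in> pos_sums G A ((p - 1) * Suc t)"
          using pos_sums_mult[OF Ac ku(3) x(3)] by simp
        ultimately show "\<exists>k\<in>K. \<exists>s\<in>pos_sums G A ((p - 1) * Suc t). x = k \<otimes> s"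
          using ku(2) by blast
      qed
    qed
  }
qed

end


section \<open>Passing to the subgroup of p-th powers\<close>

context comm_group
begin

lemma pow_group_hom: "group_hom G G (\<lambda>x. x [^] (p::nat))"
proof -
  have "(\<lambda>x. x [^] p) \<in> hom G G" by (rule homI) (simp_all add: nat_pow_distrib)
  then show ?thesis by (simp add: group_hom_def group_hom_axioms_def is_group)
qed

lemma pth_powers_subgroup: "subgroup S G \<Longrightarrow> subgroup ((\<lambda>x. x [^] (p::nat)) ` S) G"
  by (rule group_hom.subgroup_img_is_subgroup[OF pow_group_hom])

lemma pth_powers_generate:
  "A \<subseteq> carrier G \<Longrightarrow> generate G ((\<lambda>x. x [^] (p::nat)) ` A) = (\<lambda>x. x [^] p) ` generate G A"
  by (rule group_hom.generate_img[OF pow_group_hom])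

end

text \<open>The orders of the basis of S^p: divide by p those orders that p divides.\<close>
definition div_orders :: "nat \<Rightarrow> (nat \<Rightarrow> nat) \<Rightarrow> nat \<Rightarrow> nat" where
  "div_orders p n i = (if p dvd n i then n i div p else n i)"

lemma div_orders_pos: "0 < n i \<Longrightarrow> 0 < div_orders p n i"
  unfolding div_orders_def by (auto dest: dvd_imp_le simp: div_greater_zero_iff)

text \<open>If p divides n_i or n_i = 1, then p n_i' is a multiple of n_i, so (g_i^p)^(n_i') = \<one>.\<close>
lemma div_orders_dvd: "n i = 1 \<or> p dvd n i \<Longrightarrow> n i dvd p * div_orders p n i"
  unfolding div_orders_def by auto

lemma div_orders_mod:
  assumes "n i = 1 \<or> p dvd n i"
  shows "p * (c mod div_orders p n i) mod n i = p * c mod n i"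
proof (cases "p dvd n i")
  case True
  then obtain q where "n i = p * q" by blast
  then show ?thesis unfolding div_orders_def using True
    by (cases "p = 0") (simp_all add: mult_mod_right[symmetric])
qed (use assms in \<open>simp add: div_orders_def\<close>)

lemma div_orders_box:
  assumes "\<forall>i<r. n i = 1 \<or> p dvd n i" and "0 < p" and "c \<in> box r (div_orders p n)"
  shows "restrict (\<lambda>i. p * c i) {..<r} \<in> box r n"
proof -
  have "p * c i < n i" if i: "i < r" for i
  proof -
    have c: "c i < div_orders p n i" using assms(3) i by auto
    show ?thesis
    proof (cases "p dvd n i")
      case True
      then obtain q where "n i = p * q" by blast
      then show ?thesis using c True \<open>0 < p\<close> by (simp add: div_orders_def)
    next
      case False
      then have "n i = 1" using assms(1) i by blast
      then show ?thesis using c False by (simp add: div_orders_def)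
    qed
  qed
  then show ?thesis by (auto simp: PiE_iff)
qed

lemma div_orders_chain:
  assumes "\<forall>i<r. n i = 1 \<or> p dvd n i" "\<forall>i. Suc i < r \<longrightarrow> n i dvd n (Suc i)"
  shows "\<forall>i. Suc i < r \<longrightarrow> div_orders p n i dvd div_orders p n (Suc i)"
proof (intro allI impI)
  fix i assume i: "Suc i < r"
  then have d: "n i dvd n (Suc i)" using assms(2) by auto
  show "div_orders p n i dvd div_orders p n (Suc i)"
  proof (cases "p dvd n i")
    case True
    then have "p dvd n (Suc i)" using d dvd_trans by blast
    then show ?thesis using True d unfolding div_orders_def by simp
  next
    case False
    then have "n i = 1" using assms(1) Suc_lessD[OF i] by auto
    then show ?thesis unfolding div_orders_def by simp
  qed
qed

text \<open>Orders and indices: |S| = p^t |S^p| and \<Sum>(n_i - 1) = p \<Sum>(n_i' - 1) + (p - 1) t,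
  where t counts the orders divisible by p.\<close>
lemma prod_div_orders:
  fixes n :: "nat \<Rightarrow> nat"
  assumes "\<forall>i<r. n i = 1 \<or> p dvd n i"
  shows "(\<Prod>i<r. n i) = p ^ card {i\<in>{..<r}. p dvd n i} * (\<Prod>i<r. div_orders p n i)"
proof -
  have "(\<Prod>i<r. n i) = (\<Prod>i<r. (if p dvd n i then p else 1) * div_orders p n i)"
    by (rule prod.cong) (auto simp: div_orders_def)
  also have "\<dots> = (\<Prod>i<r. if p dvd n i then p else 1) * (\<Prod>i<r. div_orders p n i)"
    by (rule prod.distrib)
  also have "(\<Prod>i<r. if p dvd n i then p else 1) = (\<Prod>i\<in>{i\<in>{..<r}. p dvd n i}. p)"
    by (rule prod.inter_filter[symmetric]) simp
  finally show ?thesis by simp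
qed

lemma sum_div_orders:
  fixes n :: "nat \<Rightarrow> nat"
  assumes "\<forall>i<r. n i = 1 \<or> p dvd n i" "\<forall>i<r. 0 < n i"
  shows "(\<Sum>i<r. n i - 1) = p * (\<Sum>i<r. div_orders p n i - 1) + (p - 1) * card {i\<in>{..<r}. p dvd n i}"
proof -
  have "(\<Sum>i<r. n i - 1) = (\<Sum>i<r. p * (div_orders p n i - 1) + (if p dvd n i then p - 1 else 0))"
  proof (rule sum.cong)
    fix i assume "i \<in> {..<r}"
    then have i: "n i = 1 \<or> p dvd n i" "0 < n i" using assms by auto
    show "n i - 1 = p * (div_orders p n i - 1) + (if p dvd n i then p - 1 else 0)"
    proof (cases "p dvd n i")
      case True
      then obtain q where q: "n i = p * q" by blast
      then have "0 < q" "0 < p" using i by auto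
      then show ?thesis using q True by (simp add: div_orders_def algebra_simps)
    qed (use i in \<open>auto simp: div_orders_def\<close>)
  qed simp
  also have "\<dots> = p * (\<Sum>i<r. div_orders p n i - 1) + (\<Sum>i<r. if p dvd n i then p - 1 else 0)"
    by (simp add: sum.distrib sum_distrib_left)
  also have "(\<Sum>i<r. if p dvd n i then p - 1 else 0) = (\<Sum>i\<in>{i\<in>{..<r}. p dvd n i}. p - 1)"
    by (rule sum.inter_filter[symmetric]) simp
  finally show ?thesis by (simp add: mult.commute)
qed

context comm_group
begin

lemma power_prod_pth:
  assumes "\<And>i. i < r \<Longrightarrow> g i \<in> carrier G"
  shows "power_prod G (\<lambda>i. g i [^] p) c r = power_prod G g c r [^] (p::nat)"
  using power_prod_gen_pow[where g = g, OF assms] power_prod_pow[where g = g, OF assms] by simp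

text \<open>Distinct exponent vectors in the box of div_orders p n give distinct power products of
  the g_i^p, because p times them lie in the box of n.\<close>
lemma basis_pth_powers_inj:
  assumes S: "subgroup S G" and B: "basis G S r n g" and p: "0 < p"
    and np: "\<forall>i<r. n i = 1 \<or> p dvd n i"
  shows "inj_on (\<lambda>c. power_prod G (\<lambda>i. g i [^] p) c r) (box r (div_orders p n))"
proof (rule inj_onI)
  have inj: "inj_on (\<lambda>c. power_prod G g c r) (box r n)"
    and gc: "\<And>i. i < r \<Longrightarrow> g i \<in> carrier G"
    using B subgroup.subset[OF S] unfolding basis_def bij_betw_def by auto
  have pth: "power_prod G (\<lambda>i. g i [^] p) c r = power_prod G g (restrict (\<lambda>i. p * c i) {..<r}) r" for c
  proof -
    have "power_prod G (\<lambda>i. g i [^] p) c r = power_prod G g (\<lambda>i. p * c i) r"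
      by (rule power_prod_gen_pow[where g = g, OF gc])
    also have "\<dots> = power_prod G g (restrict (\<lambda>i. p * c i) {..<r}) r"
      by (rule power_prod_cong) simp
    finally show ?thesis .
  qed
  fix c c' assume c: "c \<in> box r (div_orders p n)" and c': "c' \<in> box r (div_orders p n)"
    and eq: "power_prod G (\<lambda>i. g i [^] p) c r = power_prod G (\<lambda>i. g i [^] p) c' r"
  have "power_prod G g (restrict (\<lambda>i. p * c i) {..<r}) r = power_prod G g (restrict (\<lambda>i. p * c' i) {..<r}) r"
    using eq unfolding pth .
  then have restr: "restrict (\<lambda>i. p * c i) {..<r} = restrict (\<lambda>i. p * c' i) {..<r}"
    by (rule inj_onD[OF inj _ div_orders_box[OF np p c] div_orders_box[OF np p c']])
  have "c i = c' i" if "i < r" for i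
  proof -
    have "restrict (\<lambda>i. p * c i) {..<r} i = restrict (\<lambda>i. p * c' i) {..<r} i" by (simp only: restr)
    then show ?thesis using that p by simp
  qed
  then show "c = c'" using c c' by (intro PiE_ext) auto
qed

text \<open>Every p-th power x^p of x \<in> S is a power product of the g_i^p with exponents in the box
  of div_orders p n: reduce the exponents of x modulo div_orders p n.\<close>
lemma basis_pth_powers_image:
  assumes S: "subgroup S G" and B: "basis G S r n g" and np: "\<forall>i<r. n i = 1 \<or> p dvd n i"
    and pos: "\<forall>i<r. 0 < n i"
  shows "(\<lambda>c. power_prod G (\<lambda>i. g i [^] p) c r) ` box r (div_orders p n) = (\<lambda>x. x [^] p) ` S"
proof
  have gS: "\<And>i. i < r \<Longrightarrow> g i \<in> S" and gn: "\<And>i. i < r \<Longrightarrow> g i [^] n i = \<one>"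
    and img: "(\<lambda>c. power_prod G g c r) ` box r n = S"
    using B unfolding basis_def bij_betw_def by auto
  have gc: "\<And>i. i < r \<Longrightarrow> g i \<in> carrier G" using gS subgroup.subset[OF S] by auto
  have gcn: "\<And>i. i < r \<Longrightarrow> g i \<in> carrier G \<and> g i [^] n i = \<one>" using gc gn by auto
  show "(\<lambda>c. power_prod G (\<lambda>i. g i [^] p) c r) ` box r (div_orders p n) \<subseteq> (\<lambda>x. x [^] p) ` S"
  proof clarify
    fix c
    have "power_prod G (\<lambda>i. g i [^] p) c r = power_prod G g c r [^] p"
      by (rule power_prod_pth[where g = g, OF gc])
    moreover have "power_prod G g c r \<in> S" by (rule power_prod_subgroup[where g = g, OF S gS])
    ultimately show "power_prod G (\<lambda>i. g i [^] p) c r \<in> (\<lambda>x. x [^] p) ` S" by simp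
  qed
  show "(\<lambda>x. x [^] p) ` S \<subseteq> (\<lambda>c. power_prod G (\<lambda>i. g i [^] p) c r) ` box r (div_orders p n)"
  proof clarify
    fix x assume "x \<in> S"
    then obtain c where x: "x = power_prod G g c r" using img by auto
    define c' where "c' = restrict (\<lambda>i. c i mod div_orders p n i) {..<r}"
    have c'_mod: "p * c' i mod n i = p * c i mod n i" if "i < r" for i
      using div_orders_mod[of n i p "c i"] np that unfolding c'_def by simp
    have "c' \<in> box r (div_orders p n)" unfolding c'_def using pos by (auto simp: div_orders_pos)
    moreover have "power_prod G (\<lambda>i. g i [^] p) c' r = x [^] p"
    proof -
      have "power_prod G (\<lambda>i. g i [^] p) c' r = power_prod G g (\<lambda>i. p * c' i) r"
        by (rule power_prod_gen_pow[where g = g, OF gc])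
      also have "\<dots> = power_prod G g (\<lambda>i. p * c' i mod n i) r"
        by (rule power_prod_mod[OF gcn])
      also have "\<dots> = power_prod G g (\<lambda>i. p * c i mod n i) r"
        by (rule power_prod_cong) (rule c'_mod)
      also have "\<dots> = power_prod G g (\<lambda>i. p * c i) r"
        by (rule power_prod_mod[OF gcn, symmetric])
      also have "\<dots> = x [^] p"
        unfolding x by (rule power_prod_pow[where g = g, OF gc, symmetric])
      finally show ?thesis .
    qed
    ultimately show "x [^] p \<in> (\<lambda>c. power_prod G (\<lambda>i. g i [^] p) c r) ` box r (div_orders p n)"
      by (metis image_eqI)
  qed
qed

lemma basis_pth_powers:
  assumes S: "subgroup S G" and B: "basis G S r n g" and p: "0 < p"
    and np: "\<forall>i<r. n i = 1 \<or> p dvd n i" and pos: "\<forall>i<r. 0 < n i"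
  shows "basis G ((\<lambda>x. x [^] p) ` S) r (div_orders p n) (\<lambda>i. g i [^] p)"
proof -
  have gS: "\<And>i. i < r \<Longrightarrow> g i \<in> S" and gn: "\<And>i. i < r \<Longrightarrow> g i [^] n i = \<one>"
    using B unfolding basis_def by auto
  have gc: "\<And>i. i < r \<Longrightarrow> g i \<in> carrier G" using gS subgroup.subset[OF S] by auto
  have "(g i [^] p) [^] div_orders p n i = \<one>" if i: "i < r" for i
  proof -
    obtain q where q: "p * div_orders p n i = n i * q" using div_orders_dvd[of n i p] np i by blast
    have "(g i [^] p) [^] div_orders p n i = (g i [^] n i) [^] q" using gc[OF i] by (simp add: nat_pow_pow q)
    also have "\<dots> = \<one>" by (simp only: gn[OF i] nat_pow_one)
    finally show ?thesis .
  qed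
  then show ?thesis
    unfolding basis_def bij_betw_def
    using basis_pth_powers_inj[OF S B p np] basis_pth_powers_image[OF S B np pos] gS by blast
qed

end


section \<open>The upper bound\<close>

lemma chain_dvd:
  assumes "\<forall>i. Suc i < r \<longrightarrow> n i dvd n (Suc i)"
  shows "i \<le> k \<Longrightarrow> k < r \<Longrightarrow> (n i :: nat) dvd n k"
proof (induction k)
  case (Suc k)
  show ?case
  proof (cases "i = Suc k")
    case False
    then have "n i dvd n k" using Suc by auto
    then show ?thesis using assms Suc.prems dvd_trans by blast
  qed simp
qed simp

lemma chain_prime:
  fixes n :: "nat \<Rightarrow> nat"
  assumes ch: "\<forall>i. Suc i < r \<longrightarrow> n i dvd n (Suc i)" and pos: "\<forall>i<r. 0 < n i"
    and nontrivial: "\<exists>j<r. 1 < n j"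
  obtains p j where "Factorial_Ring.prime p" "\<forall>i<r. n i = 1 \<or> p dvd n i" "j < r" "p dvd n j"
proof -
  define j where "j = (LEAST i. i < r \<and> 1 < n i)"
  have j: "j < r" "1 < n j" using LeastI_ex[OF nontrivial] unfolding j_def by auto
  obtain p where p: "Factorial_Ring.prime p" "p dvd n j" using prime_factor_nat[of "n j"] j by auto
  have "n i = 1 \<or> p dvd n i" if i: "i < r" for i
  proof (cases "i < j")
    case True
    then have "\<not> (i < r \<and> 1 < n i)" unfolding j_def by (rule not_less_Least)
    then show ?thesis using i pos by (metis less_one nat_neq_iff)
  next
    case False
    then have "n j dvd n i" using chain_dvd[OF ch] i by auto
    then show ?thesis using p dvd_trans by blast
  qed
  then show ?thesis using that p j by blast
qed

text \<open>Dividing out p from some order decreases \<Sum> n_i; this drives the induction.\<close>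
lemma div_orders_sum_less:
  assumes "1 < p" "j < r" "p dvd n j" "0 < n j"
  shows "(\<Sum>i<r. div_orders p n i) < (\<Sum>i<r. n i)"
proof (rule sum_strict_mono_ex1)
  show "\<forall>i\<in>{..<r}. div_orders p n i \<le> n i" unfolding div_orders_def by auto
  have "n j div p < n j" using assms by (intro div_less_dividend) auto
  then show "\<exists>i\<in>{..<r}. div_orders p n i < n i"
    using assms unfolding div_orders_def by (intro bexI[of _ j]) auto
qed simp

lemma (in comm_group) cover_from_pth_powers:
  assumes fin: "finite (carrier G)" and p: "Factorial_Ring.prime p" and S: "subgroup S G"
    and A: "A \<subseteq> S" "generate G A = S"
    and H_cover: "(\<lambda>x. x [^] p) ` S \<subseteq> pos_sums G ((\<lambda>x. x [^] p) ` A) N"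
    and index: "card S \<le> p ^ t * card ((\<lambda>x. x [^] p) ` S)"
  shows "S \<subseteq> pos_sums G A (p * N + (p - 1) * t)"
proof
  let ?H = "(\<lambda>x. x [^] p) ` S"
  have Ac: "A \<subseteq> carrier G" using A subgroup.subset[OF S] by auto
  have "pos_sums G ((\<lambda>x. x [^] p) ` A) N \<subseteq> pos_sums G A (p * N)"
    by (rule pos_sums_compose[OF Ac]) (auto intro: pos_sums_pow[OF Ac])
  then have H_cover': "?H \<subseteq> pos_sums G A (p * N)" using H_cover by blast
  have cosets: "\<forall>x\<in>S. \<exists>k\<in>?H. \<exists>s\<in>pos_sums G A ((p - 1) * t). x = k \<otimes> s"
    by (rule tower[OF fin p S A pth_powers_subgroup[OF S] _ _ index]) (auto intro: subgroup_nat_pow[OF S])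
  fix x assume "x \<in> S"
  then obtain k s where ks: "k \<in> ?H" "s \<in> pos_sums G A ((p - 1) * t)" "x = k \<otimes> s"
    using cosets by blast
  have "k \<in> pos_sums G A (p * N)" using H_cover' ks(1) by blast
  then show "x \<in> pos_sums G A (p * N + (p - 1) * t)"
    unfolding ks(3) by (rule pos_sums_mult[OF Ac _ ks(2)])
qed

lemma (in comm_group) upper_bound:
  assumes fin: "finite (carrier G)"
  shows "subgroup S G \<Longrightarrow> basis G S r n g \<Longrightarrow> \<forall>i<r. 0 < n i \<Longrightarrow> \<forall>i. Suc i < r \<longrightarrow> n i dvd n (Suc i)
    \<Longrightarrow> A \<subseteq> S \<Longrightarrow> generate G A = S \<Longrightarrow> S \<subseteq> pos_sums G A (\<Sum>i<r. n i - 1)"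
proof (induction "\<Sum>i<r. n i" arbitrary: S n g A rule: less_induct)
  case less
  note S = less.prems(1) and B = less.prems(2) and pos = less.prems(3) and ch = less.prems(4)
    and A = less.prems(5,6)
  have Ac: "A \<subseteq> carrier G" using A subgroup.subset[OF S] by auto
  show ?case
  proof (cases "\<exists>j<r. 1 < n j")
    case False
    have "n i = 1" if "i < r" for i
    proof -
      have "\<not> 1 < n i" "0 < n i" using False pos that by auto
      then show ?thesis by linarith
    qed
    then have "card S = 1" using basis_card[OF B] by simp
    then obtain z where "S = {z}" by (rule card_1_singletonE)
    then have "S = {\<one>}" using subgroup.one_closed[OF S] by auto
    then show ?thesis using pos_sums_one by auto
  next
    case True
    then obtain p j where p: "Factorial_Ring.prime p" and np: "\<forall>i<r. n i = 1 \<or> p dvd n i"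
      and j: "j < r" "p dvd n j"
      using chain_prime[OF ch pos] by blast
    have p0: "0 < p" using p by (rule prime_gt_0_nat)
    define t where "t = card {i\<in>{..<r}. p dvd n i}"
    let ?n' = "div_orders p n" and ?H = "(\<lambda>x. x [^] p) ` S"
    have BH: "basis G ?H r ?n' (\<lambda>i. g i [^] p)" by (rule basis_pth_powers[OF S B p0 np pos])
    have "?H \<subseteq> pos_sums G ((\<lambda>x. x [^] p) ` A) (\<Sum>i<r. ?n' i - 1)"
    proof (rule less.hyps[OF _ pth_powers_subgroup[OF S] BH _ div_orders_chain[OF np ch]])
      show "(\<Sum>i<r. ?n' i) < (\<Sum>i<r. n i)"
        using div_orders_sum_less[of p j r n] prime_gt_1_nat[OF p] pos j by simp
      show "\<forall>i<r. 0 < ?n' i" using pos by (simp add: div_orders_pos)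
      show "(\<lambda>x. x [^] p) ` A \<subseteq> ?H" using A by auto
      show "generate G ((\<lambda>x. x [^] p) ` A) = ?H" using pth_powers_generate[OF Ac] A by simp
    qed
    moreover have "card S \<le> p ^ t * card ?H"
      using basis_card[OF B] basis_card[OF BH] prod_div_orders[OF np] unfolding t_def by simp
    ultimately have "S \<subseteq> pos_sums G A (p * (\<Sum>i<r. ?n' i - 1) + (p - 1) * t)"
      by (rule cover_from_pth_powers[OF fin p S A])
    then show ?thesis using sum_div_orders[OF np pos] unfolding t_def by simp
  qed
qed


section \<open>The standard basis of a product of cyclic groups\<close>

abbreviation cyclic_product :: "nat \<Rightarrow> (nat \<Rightarrow> nat) \<Rightarrow> (nat \<Rightarrow> int) monoid" where
  "cyclic_product r m \<equiv> product_group {..<r} (\<lambda>i. integer_mod_group (m i))"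

definition unit_vec :: "nat \<Rightarrow> nat \<Rightarrow> nat \<Rightarrow> int" where
  "unit_vec r i = (\<lambda>k\<in>{..<r}. if k = i then 1 else 0)"

lemma carrier_cyclic_product:
  assumes "\<forall>i<r. 1 < m i"
  shows "y \<in> carrier (cyclic_product r m) \<longleftrightarrow> (\<forall>j<r. 0 \<le> y j \<and> y j < int (m j)) \<and> y \<in> extensional {..<r}"
proof -
  have "\<And>j. j < r \<Longrightarrow> m j \<noteq> 0" using assms by fastforce
  then show ?thesis by (auto simp: PiE_iff carrier_integer_mod_group)
qed

lemma unit_vec_carrier: "\<forall>i<r. 1 < m i \<Longrightarrow> i < r \<Longrightarrow> unit_vec r i \<in> carrier (cyclic_product r m)"
  by (auto simp: unit_vec_def carrier_integer_mod_group)

lemma unit_vec_pow: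
  assumes "\<forall>i<r. 1 < m i" "i < r"
  shows "unit_vec r i [^]\<^bsub>cyclic_product r m\<^esub> (c::nat) = (\<lambda>k\<in>{..<r}. if k = i then int c mod int (m i) else 0)"
proof (induction c)
  case 0 then show ?case by (auto simp: unit_vec_def)
next
  case (Suc c)
  show ?case using Suc assms
    by (auto simp: unit_vec_def fun_eq_iff mod_add_left_eq mod_add_right_eq ac_simps)
qed

lemma power_prod_unit_vec:
  assumes "\<forall>i<r. 1 < m i"
  shows "k \<le> r \<Longrightarrow> power_prod (cyclic_product r m) (unit_vec r) c k
    = (\<lambda>j\<in>{..<r}. if j < k then int (c j) mod int (m j) else 0)"
proof (induction k)
  case (Suc k)
  then have "power_prod (cyclic_product r m) (unit_vec r) c (Suc k) =
     (\<lambda>j\<in>{..<r}. if j < k then int (c j) mod int (m j) else 0) \<otimes>\<^bsub>cyclic_product r m\<^esub>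
     (\<lambda>j\<in>{..<r}. if j = k then int (c k) mod int (m k) else 0)"
    using unit_vec_pow[OF assms, of k "c k"] by simp
  also have "\<dots> = (\<lambda>j\<in>{..<r}. if j < Suc k then int (c j) mod int (m j) else 0)"
    by (auto simp: fun_eq_iff)
  finally show ?case .
qed auto

lemma basis_cyclic_product:
  assumes m: "\<forall>i<r. 1 < m i"
  shows "basis (cyclic_product r m) (carrier (cyclic_product r m)) r m (unit_vec r)"
  unfolding basis_def
proof (intro conjI allI impI)
  fix i assume i: "i < r"
  show "unit_vec r i \<in> carrier (cyclic_product r m)" by (rule unit_vec_carrier[OF m i])
  show "unit_vec r i [^]\<^bsub>cyclic_product r m\<^esub> m i = \<one>\<^bsub>cyclic_product r m\<^esub>"
    using unit_vec_pow[OF m i, of "m i"] by (auto simp: fun_eq_iff)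
next
  have eq: "power_prod (cyclic_product r m) (unit_vec r) c r = (\<lambda>j\<in>{..<r}. int (c j))"
    if "c \<in> box r m" for c
    using power_prod_unit_vec[OF m, of r c] that by (auto simp: fun_eq_iff PiE_iff)
  have nat_box: "(\<lambda>j\<in>{..<r}. nat (y j)) \<in> box r m" if y: "y \<in> carrier (cyclic_product r m)" for y
  proof -
    have "\<forall>j<r. 0 \<le> y j \<and> y j < int (m j)" using y carrier_cyclic_product[OF m] by blast
    then show ?thesis by (auto simp: PiE_iff nat_less_iff)
  qed
  show "bij_betw (\<lambda>c. power_prod (cyclic_product r m) (unit_vec r) c r) (box r m) (carrier (cyclic_product r m))"
  proof (rule bij_betwI[where g = "\<lambda>y. \<lambda>j\<in>{..<r}. nat (y j)"])
    show "(\<lambda>c. power_prod (cyclic_product r m) (unit_vec r) c r) \<in> box r m \<rightarrow> carrier (cyclic_product r m)"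
    proof
      fix c assume c: "c \<in> box r m"
      show "power_prod (cyclic_product r m) (unit_vec r) c r \<in> carrier (cyclic_product r m)"
        unfolding eq[OF c] carrier_cyclic_product[OF m] using c by (auto simp: PiE_iff)
    qed
    show "(\<lambda>y. \<lambda>j\<in>{..<r}. nat (y j)) \<in> carrier (cyclic_product r m) \<rightarrow> box r m"
      using nat_box by blast
  next
    fix c assume c: "c \<in> box r m"
    have "c \<in> extensional {..<r}" using c by (simp add: PiE_iff)
    then show "(\<lambda>j\<in>{..<r}. nat (power_prod (cyclic_product r m) (unit_vec r) c r j)) = c"
      unfolding eq[OF c] by (auto simp: fun_eq_iff extensional_def)
  next
    fix y assume y: "y \<in> carrier (cyclic_product r m)"
    have "\<forall>j<r. 0 \<le> y j" "y \<in> extensional {..<r}" using y carrier_cyclic_product[OF m] by blast+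
    then show "power_prod (cyclic_product r m) (unit_vec r) (\<lambda>j\<in>{..<r}. nat (y j)) r = y"
      unfolding eq[OF nat_box[OF y]] by (auto simp: fun_eq_iff extensional_def)
  qed
qed

lemma basis_iso:
  assumes iso: "\<psi> \<in> iso H G" and grp: "group H" "group G" and B: "basis H (carrier H) r n e"
  shows "basis G (carrier G) r n (\<lambda>i. \<psi> (e i))"
  unfolding basis_def
proof (intro conjI allI impI)
  have hom: "\<psi> \<in> hom H G" and bij: "bij_betw \<psi> (carrier H) (carrier G)"
    using iso unfolding iso_def by auto
  have ec: "\<And>i. i < r \<Longrightarrow> e i \<in> carrier H" and en: "\<And>i. i < r \<Longrightarrow> e i [^]\<^bsub>H\<^esub> n i = \<one>\<^bsub>H\<^esub>"
    and bijH: "bij_betw (\<lambda>c. power_prod H e c r) (box r n) (carrier H)"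
    using B unfolding basis_def by auto
  {
    fix i assume i: "i < r"
    show "\<psi> (e i) \<in> carrier G" using hom ec[OF i] by (rule hom_in_carrier)
    have "\<psi> (e i) [^]\<^bsub>G\<^esub> n i = \<psi> (e i [^]\<^bsub>H\<^esub> n i)"
      using hom_nat_pow[OF hom ec[OF i] grp] by simp
    then show "\<psi> (e i) [^]\<^bsub>G\<^esub> n i = \<one>\<^bsub>G\<^esub>" using en[OF i] hom_one[OF hom grp] by simp
  }
  have "(\<lambda>c. power_prod G (\<lambda>i. \<psi> (e i)) c r) = \<psi> \<circ> (\<lambda>c. power_prod H e c r)"
    using power_prod_hom[OF hom grp ec] by (auto simp: fun_eq_iff)
  then show "bij_betw (\<lambda>c. power_prod G (\<lambda>i. \<psi> (e i)) c r) (box r n) (carrier G)"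
    using bij_betw_trans[OF bijH bij] by simp
qed


theorem theorem2p1:
  fixes G :: "('a, 'b) monoid_scheme" and r :: nat and m :: "nat \<Rightarrow> nat"
  assumes "comm_group G"
    and "finite (carrier G)"
    and "\<forall>i<r. 1 < m i"
    and "\<forall>i. Suc i < r \<longrightarrow> m i dvd m (Suc i)"
    and "G \<cong> product_group {..<r} (\<lambda>i. integer_mod_group (m i))"
  shows "pos_diam G = enat (\<Sum>i<r. m i - 1)"
proof -
  interpret comm_group G by (rule assms(1))
  obtain \<psi> where iso: "\<psi> \<in> iso (cyclic_product r m) G"
    using iso_sym[OF assms(5)] unfolding is_iso_def by blast
  define g where "g = (\<lambda>i. \<psi> (unit_vec r i))"
  have B: "basis G (carrier G) r m g"
    unfolding g_def using basis_iso[OF iso _ is_group basis_cyclic_product[OF assms(3)]]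
    by (simp add: product_group group_integer_mod_group)
  have pos: "\<forall>i<r. 0 < m i" using assms(3) by auto
  show ?thesis
  proof (rule pos_diam_eqI)
    show "pos_sums G A (\<Sum>i<r. m i - 1) = carrier G"
      if "A \<subseteq> carrier G" "generate G A = carrier G" for A
      using upper_bound[OF assms(2) subgroup_self B pos assms(4) that] pos_sums_carrier[OF that(1)]
      by blast
    show "g ` {..<r} \<subseteq> carrier G" using B unfolding basis_def by auto
    show "generate G (g ` {..<r}) = carrier G" by (rule basis_generates[OF B])
    show "pos_sums G (g ` {..<r}) \<rho> \<noteq> carrier G" if "\<rho> < (\<Sum>i<r. m i - 1)" for \<rho>
      using lower_bound[OF B pos that] .
  qed
qed

end
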